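(* Let $n\ge 3$ and $f=x^n+a_{n-1}x^{n-1}+\cdots+a_0\in\mathbb{C}[x]$ with roots $r_1,\ldots,r_n$ (with multiplicity). Define the polynomials \[f_1(x,y)=\frac{f(y)-f(x)}{y-x},\qquad f_2(x,y)=\frac{f\left(\frac{x+y}{2}\right)-f(x)}{\frac{y-x}{2}}.\] Let $D_1=\prod_{1\le i<j\le n}(r_i-r_j)^2$ and $D_2=\prod_{1\le i,j,k\le n,\ i<j,\ j\ne k,\ k\ne i}(2r_k-r_i-r_j)$. Then $\operatorname{res}(f,\operatorname{res}(f_1,f_2,y),x)=0$ if and only if $D_1D_2=0$.
   Context: The quotients defining $f_1,f_2$ are polynomials in $x,y$. $\operatorname{res}(\cdot,\cdot,y)$ denotes the Sylvester resultant with respect to $y$ (and similarly for $x$). *)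

theory Defs
  imports Complex_Main "HOL-Computational_Algebra.Polynomial" "Subresultants.Resultant_Prelim"
begin

text \<open>Bivariate polynomials in x,y are represented as complex poly poly:
  the outer variable is y, the coefficients are polynomials in x.\<close>

definition poly_in_y :: "complex poly \<Rightarrow> complex poly poly" where
  "poly_in_y f = map_poly (\<lambda>c. [:c:]) f"

definition poly_in_x :: "complex poly \<Rightarrow> complex poly poly" where
  "poly_in_x f = [:f:]"

definition f1 :: "complex poly \<Rightarrow> complex poly poly" where
  "f1 f = (poly_in_y f - poly_in_x f) div [: -[:0,1:], 1 :]"

definition f2 :: "complex poly \<Rightarrow> complex poly poly" where
  "f2 f = (pcompose (poly_in_y f) [: [:0, 1/2:], [:1/2:] :] - poly_in_x f)
            div [: -[:0, 1/2:], [:1/2:] :]"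

definition D1 :: "nat \<Rightarrow> (nat \<Rightarrow> complex) \<Rightarrow> complex" where
  "D1 n r = (\<Prod>(i,j) \<in> {(i,j). i < j \<and> j < n}. (r i - r j)^2)"

definition D2 :: "nat \<Rightarrow> (nat \<Rightarrow> complex) \<Rightarrow> complex" where
  "D2 n r = (\<Prod>(i,j,k) \<in> {(i,j,k). i < j \<and> j < n \<and> k < n \<and> j \<noteq> k \<and> k \<noteq> i}.
               2 * r k - r i - r j)"

end

theory Submission
  imports Defs Subresultants.Subresultant_Gcd "HOL-Computational_Algebra.Field_as_Ring"
    "HOL-Computational_Algebra.Fundamental_Theorem_Algebra"
begin

text \<open>Over \<complex>, the resultant of f with any g vanishes iff g vanishes at some root r_k.
  The y-leading coefficients of f1 and f2 are nonzero constants, so evaluating x := r_k commutes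
  with the resultant in y. At a root a = r_k of f we get f1(a,y) = f(y)/(y - a) and
  f2(a,y) = f((a+y)/2)/((y - a)/2), i.e. the products of y - r_i and (a+y)/2 - r_j over
  i, j \<noteq> k. They have a common root iff r_k + r_i = 2 r_j for some i, j \<noteq> k: either i = j,
  a repeated root (D1 = 0), or i \<noteq> j, a root that is the midpoint of two others (D2 = 0).\<close>

lemma resultant_eq_0_iff_common_root:
  fixes p q :: "complex poly"
  assumes "p \<noteq> 0"
  shows "resultant p q = 0 \<longleftrightarrow> (\<exists>x. poly p x = 0 \<and> poly q x = 0)"
proof
  assume "resultant p q = 0"
  then have "\<not> constant (poly (gcd p q))"
    by (simp add: resultant_0_gcd constant_degree)
  then obtain x where x: "poly (gcd p q) x = 0"
    using fundamental_theorem_of_algebra by blast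
  show "\<exists>x. poly p x = 0 \<and> poly q x = 0"
    using x by (metis poly_eq_0_iff_dvd dvd_trans gcd_dvd1 gcd_dvd2)
next
  assume "\<exists>x. poly p x = 0 \<and> poly q x = 0"
  then obtain x where "[:-x,1:] dvd gcd p q"
    by (auto simp: poly_eq_0_iff_dvd)
  then have "degree [:-x,1:] \<le> degree (gcd p q)"
    using assms by (intro dvd_imp_degree_le) simp_all
  then show "resultant p q = 0" by (simp add: resultant_0_gcd)
qed

lemma degree_diff_const:
  fixes p :: "'a::idom poly"
  assumes "degree p > 0"
  shows "degree (p - [:c:]) = degree p"
proof -
  have "p - [:c:] = p + - [:c:]" by simp
  also have "degree \<dots> = degree p"
    by (rule degree_add_eq_left) (use assms in simp)
  finally show ?thesis .
qed

lemma degree_eq_of_mult_linear: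
  fixes q :: "'a::idom poly"
  assumes "q * [:c,d:] = p" and "d \<noteq> 0" and "degree p = m" and "m > 0"
  shows "degree q = m - 1"
proof -
  have "q \<noteq> 0" using assms by auto
  then show ?thesis
    using assms degree_mult_eq[of q "[:c,d:]"] by auto
qed

lemma poly_poly_in_y: "poly (poly_in_y f) q = pcompose f q"
  unfolding poly_in_y_def by (simp add: pcompose_altdef)

lemma map_poly_eval_poly_in_y: "map_poly (\<lambda>p. poly p a) (poly_in_y f) = f"
  unfolding poly_in_y_def by (simp add: map_poly_map_poly o_def)

lemma map_poly_eval_poly_in_x: "map_poly (\<lambda>p. poly p a) (poly_in_x f) = [:poly f a:]"
  unfolding poly_in_x_def by (subst poly_hom.map_poly_pCons_hom) simp

lemma degree_poly_in_y: "degree (poly_in_y f) = degree f"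
  unfolding poly_in_y_def by (rule degree_map_poly) simp

text \<open>Both numerators vanish on the diagonal y = x, i.e. at y := [:0,1:].\<close>

lemma f1_times_linear: "f1 f * [: -[:0,1:], 1:] = poly_in_y f - poly_in_x f"
proof -
  have "poly (poly_in_y f - poly_in_x f) [:0,1:] = 0"
    by (simp add: poly_poly_in_y poly_in_x_def pcompose_idR[simplified])
  then have "[: -[:0,1:], 1:] dvd poly_in_y f - poly_in_x f"
    using poly_eq_0_iff_dvd by blast
  then show ?thesis unfolding f1_def by (rule dvd_div_mult_self)
qed

lemma f2_times_linear:
  "f2 f * [: -[:0,1/2:], [:1/2:] :] =
     pcompose (poly_in_y f) [: [:0, 1/2:], [:1/2:] :] - poly_in_x f"
    (is "_ = ?N")
proof -
  have "poly [: [:0, 1/2:], [:1/2:] :] [:0,1::complex:] = [:0,1:]" by simp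
  then have "poly ?N [:0,1:] = 0"
    by (simp add: poly_pcompose poly_poly_in_y poly_in_x_def pcompose_idR[simplified])
  then have "[: -[:0,1:], 1:] dvd ?N"
    using poly_eq_0_iff_dvd by blast
  moreover have "is_unit [:[:1/2::complex:]:]"
    by (simp add: is_unit_poly_iff)
  moreover have "[: -[:0,1/2:], [:1/2:] :] = [:[:1/2::complex:]:] * [: -[:0,1:], 1:]"
    by simp
  ultimately have "[: -[:0,1/2:], [:1/2:] :] dvd ?N"
    using mult_unit_dvd_iff' by metis
  then show ?thesis unfolding f2_def by (rule dvd_div_mult_self)
qed

lemma f1_eval_x:
  "map_poly (\<lambda>p. poly p a) (f1 f) * [:-a,1:] = f - [:poly f a:]"
proof -
  interpret ev: map_poly_comm_ring_hom "\<lambda>p::complex poly. poly p a" ..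
  have "map_poly (\<lambda>p. poly p a) (f1 f) * map_poly (\<lambda>p. poly p a) [: -[:0,1:], 1:] =
      f - [:poly f a:]"
    by (simp only: f1_times_linear ev.hom_mult[symmetric] ev.hom_minus
        map_poly_eval_poly_in_y map_poly_eval_poly_in_x)
  moreover have "map_poly (\<lambda>p. poly p a) [: -[:0,1:], 1:] = [:-a,1:]" by simp
  ultimately show ?thesis by simp
qed

lemma f2_eval_x:
  "map_poly (\<lambda>p. poly p a) (f2 f) * [:-a/2,1/2:] = pcompose f [:a/2,1/2:] - [:poly f a:]"
proof -
  interpret ev: map_poly_comm_ring_hom "\<lambda>p::complex poly. poly p a" ..
  have "map_poly (\<lambda>p. poly p a) (f2 f) * map_poly (\<lambda>p. poly p a) [: -[:0,1/2:], [:1/2:] :] =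
      pcompose f (map_poly (\<lambda>p. poly p a) [: [:0, 1/2:], [:1/2:] :]) - [:poly f a:]"
    by (simp only: f2_times_linear ev.hom_mult[symmetric] ev.hom_minus
        poly_hom.map_poly_pcompose map_poly_eval_poly_in_y map_poly_eval_poly_in_x)
  moreover have "map_poly (\<lambda>p. poly p a) [: -[:0,1/2:], [:1/2:] :] = [:-a/2,1/2:]"
    and "map_poly (\<lambda>p. poly p a) [: [:0,1/2:], [:1/2:] :] = [:a/2,1/2:]"
    by simp_all
  ultimately show ?thesis by simp
qed

lemma degree_f1: "degree f > 0 \<Longrightarrow> degree (f1 f) = degree f - 1"
  by (rule degree_eq_of_mult_linear[OF f1_times_linear])
    (simp_all add: poly_in_x_def degree_diff_const degree_poly_in_y)

lemma degree_f2: "degree f > 0 \<Longrightarrow> degree (f2 f) = degree f - 1"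
  by (rule degree_eq_of_mult_linear[OF f2_times_linear])
    (simp_all add: poly_in_x_def degree_diff_const degree_pcompose degree_poly_in_y)

lemma degree_f1_eval_x:
  "degree f > 0 \<Longrightarrow> degree (map_poly (\<lambda>p. poly p a) (f1 f)) = degree f - 1"
  by (rule degree_eq_of_mult_linear[OF f1_eval_x]) (simp_all add: degree_diff_const)

lemma degree_f2_eval_x:
  "degree f > 0 \<Longrightarrow> degree (map_poly (\<lambda>p. poly p a) (f2 f)) = degree f - 1"
  by (rule degree_eq_of_mult_linear[OF f2_eval_x])
    (simp_all add: degree_diff_const degree_pcompose)

lemma poly_resultant_f1_f2:
  assumes "degree f > 0"
  shows "poly (resultant (f1 f) (f2 f)) a =
    resultant (map_poly (\<lambda>p. poly p a) (f1 f)) (map_poly (\<lambda>p. poly p a) (f2 f))"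
  by (rule poly_hom.resultant_map_poly[symmetric])
    (simp_all add: assms degree_f1 degree_f2 degree_f1_eval_x degree_f2_eval_x)

context
  fixes n k :: nat and r :: "nat \<Rightarrow> complex" and f :: "complex poly"
  assumes f_def: "f = (\<Prod>i<n. [:- r i, 1:])" and k: "k < n"
begin

lemma poly_f_root: "poly f (r k) = 0"
  using k by (auto simp: f_def poly_prod prod_zero_iff)

lemma f1_eval_root:
  "map_poly (\<lambda>p. poly p (r k)) (f1 f) = (\<Prod>i\<in>{..<n} - {k}. [:- r i, 1:])"
proof (rule mult_right_cancel[of "[:- r k, 1:]", THEN iffD1])
  have "map_poly (\<lambda>p. poly p (r k)) (f1 f) * [:- r k, 1:] = f"
    using f1_eval_x[of "r k" f] by (simp only: poly_f_root pCons_0_0 diff_zero)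
  also have "\<dots> = (\<Prod>i\<in>{..<n} - {k}. [:- r i, 1:]) * [:- r k, 1:]"
    using k by (simp only: f_def prod.remove[of "{..<n}" k] finite_lessThan lessThan_iff
        mult.commute)
  finally show "map_poly (\<lambda>p. poly p (r k)) (f1 f) * [:- r k, 1:] =
      (\<Prod>i\<in>{..<n} - {k}. [:- r i, 1:]) * [:- r k, 1:]" .
qed simp

lemma f2_eval_root:
  "map_poly (\<lambda>p. poly p (r k)) (f2 f) = (\<Prod>i\<in>{..<n} - {k}. [:r k/2 - r i, 1/2:])"
proof -
  have "pcompose [:- r i, 1:] [:r k/2, 1/2:] = [:r k/2 - r i, 1/2:]" for i
    by (simp add: pcompose_pCons)
  then have "pcompose f [:r k/2, 1/2:] = (\<Prod>i<n. [:r k/2 - r i, 1/2:])"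
    by (simp add: f_def pcompose_prod)
  also have "\<dots> = (\<Prod>i\<in>{..<n} - {k}. [:r k/2 - r i, 1/2:]) * [:-r k/2, 1/2:]"
    using k by (simp add: prod.remove mult.commute)
  finally have "map_poly (\<lambda>p. poly p (r k)) (f2 f) * [:-r k/2, 1/2:] =
      (\<Prod>i\<in>{..<n} - {k}. [:r k/2 - r i, 1/2:]) * [:-r k/2, 1/2:]"
    using f2_eval_x[of "r k" f] by (simp only: poly_f_root pCons_0_0 diff_zero)
  moreover have "[:-r k/2, 1/2:] \<noteq> 0" by simp
  ultimately show ?thesis using mult_right_cancel by blast
qed

lemma resultant_f1_f2_eval_root_eq_0_iff:
  "resultant (map_poly (\<lambda>p. poly p (r k)) (f1 f)) (map_poly (\<lambda>p. poly p (r k)) (f2 f)) = 0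
    \<longleftrightarrow> (\<exists>i<n. \<exists>j<n. i \<noteq> k \<and> j \<noteq> k \<and> r k + r i = 2 * r j)"
proof -
  have "(\<Prod>i\<in>{..<n} - {k}. [:- r i, 1:]) \<noteq> 0"
    by (simp add: prod_zero_iff)
  then have "resultant (map_poly (\<lambda>p. poly p (r k)) (f1 f)) (map_poly (\<lambda>p. poly p (r k)) (f2 f))
      = 0 \<longleftrightarrow> (\<exists>y. (\<exists>i\<in>{..<n} - {k}. y = r i) \<and> (\<exists>j\<in>{..<n} - {k}. r k/2 - r j + y/2 = 0))"
    by (simp add: f1_eval_root f2_eval_root resultant_eq_0_iff_common_root poly_prod
        prod_zero_iff)
  also have "\<dots> \<longleftrightarrow> (\<exists>i<n. \<exists>j<n. i \<noteq> k \<and> j \<noteq> k \<and> r k + r i = 2 * r j)"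
    by (auto simp: field_simps)
  finally show ?thesis .
qed

end

lemma D1_eq_0_iff: "D1 n r = 0 \<longleftrightarrow> (\<exists>i j. i < j \<and> j < n \<and> r i = r j)"
proof -
  have "finite {(i,j). i < j \<and> j < n}"
    by (rule finite_subset[of _ "{..<n} \<times> {..<n}"]) auto
  then show ?thesis by (auto simp: D1_def prod_zero_iff)
qed

lemma D2_eq_0_iff:
  "D2 n r = 0 \<longleftrightarrow>
    (\<exists>i j k. i < j \<and> j < n \<and> k < n \<and> j \<noteq> k \<and> k \<noteq> i \<and> r i + r j = 2 * r k)"
proof -
  have "finite {(i,j,k). i < j \<and> j < n \<and> k < n \<and> j \<noteq> k \<and> k \<noteq> i}"
    by (rule finite_subset[of _ "{..<n} \<times> {..<n} \<times> {..<n}"]) auto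
  moreover have "2 * r k - r i - r j = 0 \<longleftrightarrow> r i + r j = 2 * r k" for i j k
    by (auto simp: algebra_simps)
  ultimately show ?thesis by (auto simp: D2_def prod_zero_iff)
qed

lemma D1_mult_D2_eq_0_iff:
  "D1 n r * D2 n r = 0 \<longleftrightarrow> (\<exists>k<n. \<exists>i<n. \<exists>j<n. i \<noteq> k \<and> j \<noteq> k \<and> r k + r i = 2 * r j)"
proof
  assume "D1 n r * D2 n r = 0"
  then consider i j where "i < j" "j < n" "r i = r j"
    | i j k where "i < j" "j < n" "k < n" "j \<noteq> k" "k \<noteq> i" "r i + r j = 2 * r k"
    unfolding mult_eq_0_iff D1_eq_0_iff D2_eq_0_iff by blast
  then show "\<exists>k<n. \<exists>i<n. \<exists>j<n. i \<noteq> k \<and> j \<noteq> k \<and> r k + r i = 2 * r j"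
  proof cases
    case (1 i j)
    then show ?thesis by (intro exI[of _ j] conjI exI[of _ i]) auto
  next
    case (2 i j k)
    then show ?thesis by (intro exI[of _ i] conjI exI[of _ j] exI[of _ k]) auto
  qed
next
  assume "\<exists>k<n. \<exists>i<n. \<exists>j<n. i \<noteq> k \<and> j \<noteq> k \<and> r k + r i = 2 * r j"
  then obtain k i j where kij: "k < n" "i < n" "j < n" "i \<noteq> k" "j \<noteq> k" "r k + r i = 2 * r j"
    by blast
  show "D1 n r * D2 n r = 0"
  proof (cases "i = j")
    case True
    then have "r k = r j" using kij(6) by simp
    then have "D1 n r = 0"
      unfolding D1_eq_0_iff using kij by (metis linorder_neqE_nat)
    then show ?thesis by simp
  next
    case False
    then have "D2 n r = 0"
      unfolding D2_eq_0_iff using kij by (metis add.commute linorder_neqE_nat)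
    then show ?thesis by simp
  qed
qed

theorem proposition4:
  fixes n :: nat and f :: "complex poly" and r :: "nat \<Rightarrow> complex"
  assumes "n \<ge> 3"
    and "f = (\<Prod>i<n. [:- r i, 1:])"
  shows "resultant f (resultant (f1 f) (f2 f)) = 0 \<longleftrightarrow> D1 n r * D2 n r = 0"
proof -
  have "f \<noteq> 0" using assms(2) by (simp add: prod_zero_iff)
  have "degree f = n"
    using assms(2) by (simp add: degree_prod_eq_sum_degree)
  then have "degree f > 0" using assms(1) by simp
  have roots: "poly f x = 0 \<longleftrightarrow> (\<exists>k<n. x = r k)" for x
    using assms(2) by (auto simp: poly_prod prod_zero_iff)
  have "resultant f (resultant (f1 f) (f2 f)) = 0 \<longleftrightarrow>
      (\<exists>k<n. poly (resultant (f1 f) (f2 f)) (r k) = 0)"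
    unfolding resultant_eq_0_iff_common_root[OF \<open>f \<noteq> 0\<close>] roots by blast
  also have "\<dots> \<longleftrightarrow> (\<exists>k<n. \<exists>i<n. \<exists>j<n. i \<noteq> k \<and> j \<noteq> k \<and> r k + r i = 2 * r j)"
  proof -
    have "poly (resultant (f1 f) (f2 f)) (r k) = 0 \<longleftrightarrow>
        (\<exists>i<n. \<exists>j<n. i \<noteq> k \<and> j \<noteq> k \<and> r k + r i = 2 * r j)" if "k < n" for k
      using resultant_f1_f2_eval_root_eq_0_iff[OF assms(2) that]
      by (simp only: poly_resultant_f1_f2[OF \<open>degree f > 0\<close>])
    then show ?thesis by auto
  qed
  also have "\<dots> \<longleftrightarrow> D1 n r * D2 n r = 0"
    by (rule D1_mult_D2_eq_0_iff[symmetric])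
  finally show ?thesis .
qed

end
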